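(* Fix integers $d,p,K,T\ge 1$, integers $n_1,\dots,n_T\ge 1$, covariate vectors $X^{(1)},\dots,X^{(T)}\in\mathbb{R}^p$, and data points $y_i^{(t)}\in\mathbb{R}^d$ ($t=1,\dots,T$, $i=1,\dots,n_t$). Let $N=\sum_{t=1}^T n_t$. Fix $\lambda_\alpha,\lambda_\beta\ge 0$ and $r>0$, and let $$g(\alpha,\beta)=\lambda_\alpha\sum_{k=1}^K\|\alpha_k\|_1+\lambda_\beta\sum_{k=1}^K\|\beta_k\|_1+\sum_{k=1}^K\sum_{t=1}^T \iota\{\|\beta_k^TX^{(t)}\|_2\le r\},$$ where $\iota\{A\}=0$ if $A$ holds and $+\infty$ otherwise. For a parameter $\theta=(\alpha,\beta,\Sigma)$ define $$\log\mathcal{L}(\theta)=\sum_{t=1}^T\sum_{i=1}^{n_t}\log\Big(\sum_{k=1}^K\pi_{kt}(\alpha)\,\phi\big(y_i^{(t)};\mu_{kt}(\beta),\Sigma_k\big)\Big).$$ Assume: (1) the parameter space $\Theta$ of $\theta=(\alpha,\beta,\Sigma)$ is compact, and there is a constant $c>0$ such that $\lambda_{\min}(\Sigma_k)\ge c$ for every $\theta\in\Theta$ and every $k=1,\dots,K$; (2) all data points lie in a compact set $\mathcal{Y}\subset\mathbb{R}^d$ with $\max_{y,y'\in\mathcal{Y}}\|y-y'\|_\infty\le R$ for some constant $0<R<\infty$; (3) $\log\mathcal{L}(\theta)<\infty$ for all $\theta\in\Theta$. Let $Q$ be a closed axis-aligned cube in $\mathbb{R}^d$ of side length $R$ containing $\mathcal{Y}$.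 For each positive integer $D$, let $B=D^d$ and partition $Q$ into $B$ congruent (half-open, so disjoint) axis-aligned subcubes $E_1,\dots,E_B$ of side length $R/D$ with centers $\tilde y_1,\dots,\tilde y_B$; let $C_b^{(t)}=\#\{i\in\{1,\dots,n_t\}: y_i^{(t)}\in E_b\}$ and define the binned log-likelihood $$\ell_B(\theta)=\sum_{t=1}^T\sum_{b=1}^B C_b^{(t)}\log\Big(\sum_{k=1}^K\pi_{kt}(\alpha)\,\phi\big(\tilde y_b;\mu_{kt}(\beta),\Sigma_k\big)\Big).$$ Let $\tilde\Theta_B=\operatorname{argmin}_{\theta\in\Theta}\big(-\tfrac1N\ell_B(\theta)+g(\alpha,\beta)\big)$ and $\hat\Theta=\operatorname{argmin}_{\theta\in\Theta}\big(-\tfrac1N\log\mathcal{L}(\theta)+g(\alpha,\beta)\big)$. Then for any sequence $\tilde\theta_B\in\tilde\Theta_B$ (indexed by $B=D^d$, $D=1,2,\dots$), there exists a subsequence $\tilde\theta_{s_B}$ that converges, and its limit lies in $\hat\Theta$: $\lim_{B\to\infty}\tilde\theta_{s_B}\in\hat\Theta$.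
   Context: Model: $\alpha=\{\alpha_{0k}\in\mathbb{R},\alpha_k\in\mathbb{R}^p\}_{k=1}^K$, $\beta=\{\beta_{0k}\in\mathbb{R}^d,\beta_k\in\mathbb{R}^{p\times d}\}_{k=1}^K$, $\Sigma=\{\Sigma_k\}_{k=1}^K$ with each $\Sigma_k$ a $d\times d$ symmetric positive definite matrix. Cluster means and probabilities are $\mu_{kt}(\beta)=\beta_{0k}+\beta_k^TX^{(t)}\in\mathbb{R}^d$ and $\pi_{kt}(\alpha)=\exp(\alpha_{0k}+X^{(t)T}\alpha_k)/\sum_{l=1}^K\exp(\alpha_{0l}+X^{(t)T}\alpha_l)$. $\phi(\cdot;\mu,\Sigma)$ denotes the $d$-variate Gaussian density with mean $\mu$ and covariance $\Sigma$. $\lambda_{\min}$ denotes the smallest eigenvalue. The binned likelihood equals the original likelihood with each data point replaced by the center of the bin containing it. *)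

theory Defs
  imports "HOL-Analysis.Analysis"
begin

text \<open>Parameters theta = (alpha0, alpha, beta0, beta, Sigma); clusters indexed by a finite type 'k,
  covariates in real^'p, data in real^'d. beta_k is a p x d matrix, i.e. of type (real^'d)^'p.\<close>

type_synonym ('k,'p,'d) param =
  "(real^'k) \<times> ((real^'p)^'k) \<times> ((real^'d)^'k) \<times> (((real^'d)^'p)^'k) \<times> (((real^'d)^'d)^'k)"

definition alpha0 :: "('k::finite,'p::finite,'d::finite) param \<Rightarrow> real^'k" where
  "alpha0 \<theta> = fst \<theta>"
definition alpha :: "('k::finite,'p::finite,'d::finite) param \<Rightarrow> (real^'p)^'k" where
  "alpha \<theta> = fst (snd \<theta>)"
definition beta0 :: "('k::finite,'p::finite,'d::finite) param \<Rightarrow> (real^'d)^'k" where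
  "beta0 \<theta> = fst (snd (snd \<theta>))"
definition beta :: "('k::finite,'p::finite,'d::finite) param \<Rightarrow> ((real^'d)^'p)^'k" where
  "beta \<theta> = fst (snd (snd (snd \<theta>)))"
definition Sig :: "('k::finite,'p::finite,'d::finite) param \<Rightarrow> ((real^'d)^'d)^'k" where
  "Sig \<theta> = snd (snd (snd (snd \<theta>)))"

definition lambda_min :: "real^'n^'n \<Rightarrow> real" where
  "lambda_min A = Inf {l. \<exists>v. v \<noteq> 0 \<and> A *v v = l *\<^sub>R v}"

definition symmetric_matrix :: "real^'n^'n \<Rightarrow> bool" where
  "symmetric_matrix A \<longleftrightarrow> transpose A = A"

definition pos_def_matrix :: "real^'n^'n \<Rightarrow> bool" where
  "pos_def_matrix A \<longleftrightarrow> symmetric_matrix A \<and> (\<forall>x. x \<noteq> 0 \<longrightarrow> x \<bullet> (A *v x) > 0)"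

definition gauss_pdf :: "real^'d \<Rightarrow> real^'d \<Rightarrow> real^'d^'d \<Rightarrow> real" where
  "gauss_pdf y \<mu> S =
     (2 * pi) powr (- real CARD('d) / 2) * (det S) powr (- 1 / 2) *
     exp (- (1 / 2) * ((y - \<mu>) \<bullet> (matrix_inv S *v (y - \<mu>))))"

definition mu_kt :: "('k::finite,'p::finite,'d::finite) param \<Rightarrow> 'k \<Rightarrow> real^'p \<Rightarrow> real^'d" where
  "mu_kt \<theta> k X = beta0 \<theta> $ k + (X v* (beta \<theta> $ k))"

definition pi_kt :: "('k::finite,'p::finite,'d::finite) param \<Rightarrow> 'k \<Rightarrow> real^'p \<Rightarrow> real" where
  "pi_kt \<theta> k X = exp (alpha0 \<theta> $ k + X \<bullet> (alpha \<theta> $ k)) /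
      (\<Sum>l\<in>UNIV. exp (alpha0 \<theta> $ l + X \<bullet> (alpha \<theta> $ l)))"

definition mix_density :: "('k::finite,'p::finite,'d::finite) param \<Rightarrow> real^'p \<Rightarrow> real^'d \<Rightarrow> real" where
  "mix_density \<theta> X y = (\<Sum>k\<in>UNIV. pi_kt \<theta> k X * gauss_pdf y (mu_kt \<theta> k X) (Sig \<theta> $ k))"

definition log_lik ::
  "nat \<Rightarrow> (nat \<Rightarrow> nat) \<Rightarrow> (nat \<Rightarrow> real^'p) \<Rightarrow> (nat \<Rightarrow> nat \<Rightarrow> real^'d)
     \<Rightarrow> ('k::finite,'p::finite,'d::finite) param \<Rightarrow> real" where
  "log_lik T n X y \<theta> = (\<Sum>t<T. \<Sum>i<n t. ln (mix_density \<theta> (X t) (y t i)))"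

definition l1norm :: "real^'n \<Rightarrow> real" where
  "l1norm x = (\<Sum>i\<in>UNIV. \<bar>x $ i\<bar>)"

definition l1norm_mat :: "real^'m^'n \<Rightarrow> real" where
  "l1norm_mat B = (\<Sum>i\<in>UNIV. \<Sum>j\<in>UNIV. \<bar>B $ i $ j\<bar>)"

definition linf_norm :: "real^'n \<Rightarrow> real" where
  "linf_norm x = Max (range (\<lambda>i. \<bar>x $ i\<bar>))"

definition penalty ::
  "real \<Rightarrow> real \<Rightarrow> real \<Rightarrow> nat \<Rightarrow> (nat \<Rightarrow> real^'p)
     \<Rightarrow> ('k::finite,'p::finite,'d::finite) param \<Rightarrow> ereal" where
  "penalty la lb r T X \<theta> =
     ereal (la * (\<Sum>k\<in>UNIV. l1norm (alpha \<theta> $ k)) + lb * (\<Sum>k\<in>UNIV. l1norm_mat (beta \<theta> $ k)))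
     + (\<Sum>k\<in>UNIV. \<Sum>t<T. (if norm (X t v* (beta \<theta> $ k)) \<le> r then 0 else \<infinity>))"

definition argmin_on :: "'a set \<Rightarrow> ('a \<Rightarrow> ereal) \<Rightarrow> 'a set" where
  "argmin_on \<Theta> F = {\<theta>\<in>\<Theta>. \<forall>\<theta>'\<in>\<Theta>. F \<theta> \<le> F \<theta>'}"

text \<open>Binning of the cube Q = prod_i [a_i, a_i + R] into D^d subcubes of side R/D. A point belongs to the
  half-open subcube [a_i + b_i R/D, a_i + (b_i+1) R/D) in each coordinate; points on the
  upper face of Q are assigned to the last subcube in that coordinate.\<close>
definition bins :: "nat \<Rightarrow> ('d::finite \<Rightarrow> nat) set" where
  "bins D = {b. \<forall>i. b i < D}"

definition bin_of :: "real^'d \<Rightarrow> real \<Rightarrow> nat \<Rightarrow> real^'d \<Rightarrow> ('d::finite \<Rightarrow> nat)" where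
  "bin_of a R D x = (\<lambda>i. min (D - 1) (nat \<lfloor>(x $ i - a $ i) * real D / R\<rfloor>))"

definition bin_center :: "real^'d \<Rightarrow> real \<Rightarrow> nat \<Rightarrow> ('d::finite \<Rightarrow> nat) \<Rightarrow> real^'d" where
  "bin_center a R D b = (\<chi> i. a $ i + (real (b i) + 1 / 2) * R / real D)"

definition bin_count ::
  "real^'d \<Rightarrow> real \<Rightarrow> nat \<Rightarrow> (nat \<Rightarrow> nat) \<Rightarrow> (nat \<Rightarrow> nat \<Rightarrow> real^'d) \<Rightarrow> nat \<Rightarrow> ('d::finite \<Rightarrow> nat) \<Rightarrow> nat" where
  "bin_count a R D n y t b = card {i. i < n t \<and> bin_of a R D (y t i) = b}"

definition binned_log_lik ::
  "real^'d \<Rightarrow> real \<Rightarrow> nat \<Rightarrow> nat \<Rightarrow> (nat \<Rightarrow> nat) \<Rightarrow> (nat \<Rightarrow> real^'p) \<Rightarrow> (nat \<Rightarrow> nat \<Rightarrow> real^'d)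
     \<Rightarrow> ('k::finite,'p::finite,'d::finite) param \<Rightarrow> real" where
  "binned_log_lik a R D T n X y \<theta> =
     (\<Sum>t<T. \<Sum>b\<in>bins D. real (bin_count a R D n y t b) * ln (mix_density \<theta> (X t) (bin_center a R D b)))"

end

theory Submission
  imports Defs
begin

text \<open>Binning moves every data point by at most the diameter of a subcube of side R/D, so the
  binned log-likelihood is the log-likelihood evaluated at perturbed data. Since every covariance
  matrix in \<open>\<Theta>\<close> is invertible, the log mixture density is jointly continuous in the parameter
  and the data point; hence along any convergent sequence of parameters the normalised binned
  objective converges to the original one as D \<rightarrow> \<infinity>. Compactness of \<open>\<Theta>\<close> yields a convergent
  subsequence of binned minimisers. The penalty is a continuous l1 term on the closed set where
  every \<open>\<beta>\<^sub>k\<^sup>T X\<close> has norm at most r and +\<infinity> outside it, so the minimising inequalities pass to the limit.\<close>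

lemma tendsto_det:
  fixes A :: "'a \<Rightarrow> 'b::real_normed_field^'n^'n"
  assumes "(A \<longlongrightarrow> B) F"
  shows "((\<lambda>x. det (A x)) \<longlongrightarrow> det B) F"
  unfolding det_def by (intro tendsto_intros assms)

lemma matrix_inv_mult_eq_cramer:
  fixes S :: "'a::field^'n^'n"
  assumes "det S \<noteq> 0"
  shows "matrix_inv S *v v = (\<chi> k. det (\<chi> i j. if j = k then v $ i else S $ i $ j) / det S)"
proof -
  have "\<exists>S'. S ** S' = mat 1 \<and> S' ** S = mat 1"
    using assms invertible_det_nz unfolding invertible_def by blast
  then have "S ** matrix_inv S = mat 1"
    unfolding matrix_inv_def by (rule someI_ex[THEN conjunct1])
  then have "S *v (matrix_inv S *v v) = v"
    by (simp add: matrix_vector_mul_assoc)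
  then show ?thesis
    using cramer[OF assms] by blast
qed

lemma tendsto_matrix_inv_mult:
  fixes S :: "'a \<Rightarrow> 'b::real_normed_field^'n^'n"
  assumes S: "(S \<longlongrightarrow> S0) F" and v: "(v \<longlongrightarrow> v0) F" and "det S0 \<noteq> 0"
  shows "((\<lambda>x. matrix_inv (S x) *v v x) \<longlongrightarrow> matrix_inv S0 *v v0) F"
proof -
  define cramer :: "'b^'n^'n \<Rightarrow> 'b^'n \<Rightarrow> 'b^'n" where
    "cramer M w = (\<chi> k. det (\<chi> i j. if j = k then w $ i else M $ i $ j) / det M)" for M w
  have entries: "((\<lambda>x. (\<chi> i j. if j = k then v x $ i else S x $ i $ j))
          \<longlongrightarrow> (\<chi> i j. if j = k then v0 $ i else S0 $ i $ j)) F" for k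
  proof (intro tendsto_vec_lambda)
    fix i j
    show "((\<lambda>x. if j = k then v x $ i else S x $ i $ j) \<longlongrightarrow> (if j = k then v0 $ i else S0 $ i $ j)) F"
      by (cases "j = k") (auto intro!: tendsto_intros S v)
  qed
  have "((\<lambda>x. cramer (S x) (v x)) \<longlongrightarrow> cramer S0 v0) F"
    unfolding cramer_def
  proof (rule tendsto_vec_lambda)
    fix k
    show "((\<lambda>x. det (\<chi> i j. if j = k then v x $ i else S x $ i $ j) / det (S x))
        \<longlongrightarrow> det (\<chi> i j. if j = k then v0 $ i else S0 $ i $ j) / det S0) F"
      by (rule tendsto_divide[OF tendsto_det[OF entries] tendsto_det[OF S] \<open>det S0 \<noteq> 0\<close>])
  qed
  moreover have "eventually (\<lambda>x. det (S x) \<noteq> 0) F"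
    by (rule tendsto_imp_eventually_ne[OF tendsto_det[OF S] \<open>det S0 \<noteq> 0\<close>])
  then have "eventually (\<lambda>x. cramer (S x) (v x) = matrix_inv (S x) *v v x) F"
    by eventually_elim (simp add: cramer_def matrix_inv_mult_eq_cramer)
  ultimately have "((\<lambda>x. matrix_inv (S x) *v v x) \<longlongrightarrow> cramer S0 v0) F"
    by (rule Lim_transform_eventually)
  then show ?thesis
    by (simp add: cramer_def matrix_inv_mult_eq_cramer[OF \<open>det S0 \<noteq> 0\<close>])
qed

lemma tendsto_gauss_pdf:
  assumes "(y \<longlongrightarrow> y0) F" "(\<mu> \<longlongrightarrow> \<mu>0) F" "(S \<longlongrightarrow> S0) F" "det S0 \<noteq> 0"
  shows "((\<lambda>x. gauss_pdf (y x) (\<mu> x) (S x)) \<longlongrightarrow> gauss_pdf y0 \<mu>0 S0) F"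
proof -
  have "((\<lambda>x. (y x - \<mu> x) \<bullet> (matrix_inv (S x) *v (y x - \<mu> x)))
      \<longlongrightarrow> (y0 - \<mu>0) \<bullet> (matrix_inv S0 *v (y0 - \<mu>0))) F"
    by (intro tendsto_inner tendsto_diff tendsto_matrix_inv_mult assms)
  moreover have "((\<lambda>x. det (S x) powr (- 1 / 2)) \<longlongrightarrow> det S0 powr (- 1 / 2)) F"
    by (intro tendsto_powr tendsto_det tendsto_const assms)
  ultimately show ?thesis
    unfolding gauss_pdf_def by (intro tendsto_mult tendsto_exp tendsto_const)
qed

text \<open>Only \<open>det S \<noteq> 0\<close> is needed: for \<open>det S < 0\<close> the junk value \<open>det S powr (-1/2)\<close> is
  still positive.\<close>
lemma gauss_pdf_pos: "det S \<noteq> 0 \<Longrightarrow> gauss_pdf y \<mu> S > 0"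
  unfolding gauss_pdf_def by simp

lemma pos_def_matrix_det_nonzero:
  fixes S :: "real^'n^'n"
  assumes "pos_def_matrix S"
  shows "det S \<noteq> 0"
proof
  assume "det S = 0"
  then obtain u w where "u \<noteq> w" "S *v u = S *v w"
    using det_nz_iff_inj[of "(*v) S"] unfolding inj_def by auto
  then have "u - w \<noteq> 0" "S *v (u - w) = 0"
    by (auto simp: matrix_vector_mult_diff_distrib)
  with assms show False
    unfolding pos_def_matrix_def by fastforce
qed

lemma pi_kt_pos: "pi_kt \<theta> k X > 0"
  unfolding pi_kt_def by (intro divide_pos_pos sum_pos) auto

lemma tendsto_pi_kt:
  fixes \<theta> :: "'a \<Rightarrow> ('k::finite,'p::finite,'d::finite) param"
  assumes "(\<theta> \<longlongrightarrow> L) F"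
  shows "((\<lambda>x. pi_kt (\<theta> x) k X) \<longlongrightarrow> pi_kt L k X) F"
proof -
  have "(\<Sum>l\<in>UNIV. exp (alpha0 L $ l + X \<bullet> (alpha L $ l))) \<noteq> 0"
    by (metis UNIV_not_empty exp_gt_zero finite_class.finite_UNIV less_irrefl sum_pos)
  then show ?thesis
    unfolding pi_kt_def alpha0_def alpha_def by (intro tendsto_intros assms) auto
qed

lemma tendsto_mu_kt:
  fixes \<theta> :: "'a \<Rightarrow> ('k::finite,'p::finite,'d::finite) param"
  assumes "(\<theta> \<longlongrightarrow> L) F"
  shows "((\<lambda>x. mu_kt (\<theta> x) k X) \<longlongrightarrow> mu_kt L k X) F"
  unfolding mu_kt_def beta0_def beta_def vector_matrix_mult_def
  by (intro tendsto_intros assms)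

lemma mix_density_pos:
  "\<forall>k. det (Sig \<theta> $ k) \<noteq> 0 \<Longrightarrow> mix_density \<theta> X y > 0"
  unfolding mix_density_def by (intro sum_pos mult_pos_pos pi_kt_pos gauss_pdf_pos) auto

lemma tendsto_ln_mix_density:
  fixes \<theta> :: "'a \<Rightarrow> ('k::finite,'p::finite,'d::finite) param"
  assumes "(\<theta> \<longlongrightarrow> L) F" "(y \<longlongrightarrow> y0) F" "\<forall>k. det (Sig L $ k) \<noteq> 0"
  shows "((\<lambda>x. ln (mix_density (\<theta> x) X (y x))) \<longlongrightarrow> ln (mix_density L X y0)) F"
proof -
  have Sig: "((\<lambda>x. Sig (\<theta> x) $ k) \<longlongrightarrow> Sig L $ k) F" for k
    unfolding Sig_def by (intro tendsto_intros assms)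
  have "((\<lambda>x. mix_density (\<theta> x) X (y x)) \<longlongrightarrow> mix_density L X y0) F"
    unfolding mix_density_def
    by (intro tendsto_sum tendsto_mult tendsto_pi_kt tendsto_gauss_pdf tendsto_mu_kt Sig assms(1,2))
       (use assms(3) in auto)
  moreover have "mix_density L X y0 \<noteq> 0"
    using mix_density_pos[OF assms(3)] by (metis less_irrefl)
  ultimately show ?thesis by (rule tendsto_ln)
qed

lemma sum_card_fiber_mult:
  fixes h :: "'b \<Rightarrow> real"
  assumes "finite A" "finite B" "g ` A \<subseteq> B"
  shows "(\<Sum>b\<in>B. real (card {i\<in>A. g i = b}) * h b) = (\<Sum>i\<in>A. h (g i))"
proof -
  have "(\<Sum>i\<in>A. h (g i)) = (\<Sum>b\<in>B. \<Sum>i\<in>{i\<in>A. g i = b}. h (g i))"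
    using sum.group[OF assms, of "\<lambda>i. h (g i)"] by simp
  also have "\<dots> = (\<Sum>b\<in>B. real (card {i\<in>A. g i = b}) * h b)"
    by (intro sum.cong refl) auto
  finally show ?thesis by simp
qed

lemma finite_bins: "finite (bins D :: ('d::finite \<Rightarrow> nat) set)"
proof -
  have "bins D = (PiE UNIV (\<lambda>_::'d. {..<D}))"
    unfolding bins_def by (auto simp: PiE_def Pi_def)
  then show ?thesis by (simp add: finite_PiE)
qed

lemma bin_of_in_bins: "D \<ge> 1 \<Longrightarrow> bin_of a R D x \<in> bins D"
  unfolding bins_def bin_of_def by auto

lemma binned_log_lik_eq_sum_data:
  assumes "D \<ge> 1"
  shows "binned_log_lik a R D T n X y \<theta> =
    (\<Sum>t<T. \<Sum>i<n t. ln (mix_density \<theta> (X t) (bin_center a R D (bin_of a R D (y t i)))))"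
  unfolding binned_log_lik_def bin_count_def
proof (intro sum.cong refl)
  fix t
  have fiber: "{i. i < n t \<and> bin_of a R D (y t i) = b} = {i\<in>{..<n t}. bin_of a R D (y t i) = b}" for b
    by auto
  show "(\<Sum>b\<in>bins D. real (card {i. i < n t \<and> bin_of a R D (y t i) = b}) *
          ln (mix_density \<theta> (X t) (bin_center a R D b))) =
        (\<Sum>i<n t. ln (mix_density \<theta> (X t) (bin_center a R D (bin_of a R D (y t i)))))"
    unfolding fiber by (rule sum_card_fiber_mult) (auto simp: finite_bins bin_of_in_bins[OF assms])
qed

lemma bin_center_coordinate_dist:
  fixes x a :: "real^'d::finite"
  assumes "D \<ge> 1" "R > 0" "a $ i \<le> x $ i" "x $ i \<le> a $ i + R"
  shows "\<bar>bin_center a R D (bin_of a R D x) $ i - x $ i\<bar> \<le> R / real D"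
proof -
  define z where "z = (x $ i - a $ i) * real D / R"
  have "0 \<le> z" using assms unfolding z_def by auto
  have "(x $ i - a $ i) * real D \<le> R * real D" using assms by (intro mult_right_mono) auto
  then have "z \<le> real D" using assms unfolding z_def by (simp add: divide_le_eq)
  define m where "m = min (D - 1) (nat \<lfloor>z\<rfloor>)"
  have m: "\<bar>real m + 1/2 - z\<bar> \<le> 1"
  proof (cases "nat \<lfloor>z\<rfloor> \<le> D - 1")
    case True
    then have "real m = of_int \<lfloor>z\<rfloor>" using \<open>0 \<le> z\<close> unfolding m_def by simp
    then show ?thesis by linarith
  next
    case False
    then have "m = D - 1" "\<lfloor>z\<rfloor> \<ge> int D" unfolding m_def by linarith+
    then show ?thesis using \<open>z \<le> real D\<close> assms(1) by (simp add: of_nat_diff) linarith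
  qed
  have "bin_center a R D (bin_of a R D x) $ i - x $ i = (real m + 1/2 - z) * (R / real D)"
    unfolding bin_center_def bin_of_def m_def z_def using assms by (simp add: field_simps)
  then have "\<bar>bin_center a R D (bin_of a R D x) $ i - x $ i\<bar> = \<bar>real m + 1/2 - z\<bar> * (R / real D)"
    using assms by (simp add: abs_mult)
  also have "\<dots> \<le> R / real D" using m assms by (intro mult_left_le_one_le) auto
  finally show ?thesis .
qed

lemma bin_center_tendsto:
  fixes x a :: "real^'d::finite"
  assumes "R > 0" "\<forall>i. a $ i \<le> x $ i \<and> x $ i \<le> a $ i + R"
  shows "(\<lambda>D. bin_center a R D (bin_of a R D x)) \<longlonglongrightarrow> x"
proof -
  have "eventually (\<lambda>D. norm (bin_center a R D (bin_of a R D x) - x) \<le> real CARD('d) * R / real D)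
      sequentially"
    using eventually_ge_at_top[of "1::nat"]
  proof eventually_elim
    case (elim D)
    have "norm (bin_center a R D (bin_of a R D x) - x)
        \<le> (\<Sum>i\<in>UNIV. \<bar>(bin_center a R D (bin_of a R D x) - x) $ i\<bar>)"
      by (rule norm_le_l1_cart)
    also have "\<dots> \<le> (\<Sum>i\<in>(UNIV::'d set). R / real D)"
      using bin_center_coordinate_dist[OF elim assms(1)] assms(2) by (intro sum_mono) auto
    finally show ?case by simp
  qed
  moreover have "(\<lambda>D. real CARD('d) * R / real D) \<longlonglongrightarrow> 0"
    by (intro tendsto_divide_0[OF tendsto_const] filterlim_at_top_imp_at_infinity
        filterlim_real_sequentially)
  ultimately have "(\<lambda>D. bin_center a R D (bin_of a R D x) - x) \<longlonglongrightarrow> 0"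
    by (rule Lim_null_comparison)
  then show ?thesis by (simp add: LIM_zero_iff)
qed

lemma tendsto_binned_log_lik:
  fixes \<theta> :: "nat \<Rightarrow> ('k::finite,'p::finite,'d::finite) param"
  assumes "\<theta> \<longlonglongrightarrow> L" "filterlim D at_top sequentially" "\<forall>k. det (Sig L $ k) \<noteq> 0" "R > 0"
    and "\<forall>t<T. \<forall>i<n t. \<forall>j. a $ j \<le> y t i $ j \<and> y t i $ j \<le> a $ j + R"
  shows "(\<lambda>m. binned_log_lik a R (D m) T n X y (\<theta> m)) \<longlonglongrightarrow> log_lik T n X y L"
proof -
  have "(\<lambda>m. \<Sum>t<T. \<Sum>i<n t. ln (mix_density (\<theta> m) (X t) (bin_center a R (D m) (bin_of a R (D m) (y t i)))))
      \<longlonglongrightarrow> log_lik T n X y L"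
    unfolding log_lik_def
  proof (intro tendsto_sum tendsto_ln_mix_density assms(1,3))
    fix t i assume "t \<in> {..<T}" "i \<in> {..<n t}"
    then have "\<forall>j. a $ j \<le> y t i $ j \<and> y t i $ j \<le> a $ j + R"
      using assms(5) by auto
    then show "(\<lambda>m. bin_center a R (D m) (bin_of a R (D m) (y t i))) \<longlonglongrightarrow> y t i"
      by (rule filterlim_compose[OF bin_center_tendsto[OF assms(4)] assms(2)])
  qed
  moreover have "eventually (\<lambda>m. D m \<ge> 1) sequentially"
    using assms(2) by (simp add: filterlim_at_top)
  ultimately show ?thesis
    by (rule Lim_transform_eventually[OF _ eventually_mono]) (simp add: binned_log_lik_eq_sum_data)
qed

definition l1_penalty :: "real \<Rightarrow> real \<Rightarrow> ('k::finite,'p::finite,'d::finite) param \<Rightarrow> real" where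
  "l1_penalty la lb \<theta> =
     la * (\<Sum>k\<in>UNIV. l1norm (alpha \<theta> $ k)) + lb * (\<Sum>k\<in>UNIV. l1norm_mat (beta \<theta> $ k))"

definition feasible_params ::
  "real \<Rightarrow> nat \<Rightarrow> (nat \<Rightarrow> real^'p) \<Rightarrow> ('k::finite,'p::finite,'d::finite) param set" where
  "feasible_params r T X = {\<theta>. \<forall>k. \<forall>t<T. norm (X t v* (beta \<theta> $ k)) \<le> r}"

lemma penalty_eq_if:
  "penalty la lb r T X \<theta> =
     (if \<theta> \<in> feasible_params r T X then ereal (l1_penalty la lb \<theta>) else \<infinity>)"
proof (cases "\<theta> \<in> feasible_params r T X")
  case True
  then show ?thesis unfolding penalty_def l1_penalty_def feasible_params_def by simp
next
  case False
  then obtain k t where "t < T" "\<not> norm (X t v* (beta \<theta> $ k)) \<le> r"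
    unfolding feasible_params_def by auto
  then have "(\<Sum>k\<in>UNIV. \<Sum>t<T. (if norm (X t v* (beta \<theta> $ k)) \<le> r then 0 else \<infinity>)) = (\<infinity>::ereal)"
    unfolding sum_Pinfty by (auto intro!: bexI[of _ k] bexI[of _ t])
  with False show ?thesis unfolding penalty_def by simp
qed

lemma continuous_l1_penalty: "continuous_on UNIV (l1_penalty la lb)"
  unfolding l1_penalty_def l1norm_def l1norm_mat_def alpha_def beta_def
  by (intro continuous_intros)

lemma closed_feasible_params: "closed (feasible_params r T X)"
  unfolding feasible_params_def vector_matrix_mult_def beta_def
  by (intro closed_Collect_all closed_Collect_imp closed_Collect_le continuous_intros) auto

lemma compact_subseq_tendsto_from:
  fixes \<theta> :: "nat \<Rightarrow> 'a::first_countable_topology"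
  assumes "compact K" "\<forall>j\<ge>m. \<theta> j \<in> K"
  shows "\<exists>s L. strict_mono s \<and> (\<forall>j. s j \<ge> m) \<and> L \<in> K \<and> (\<theta> \<circ> s) \<longlonglongrightarrow> L"
proof -
  have "\<forall>j. \<theta> (j + m) \<in> K" using assms(2) by simp
  then obtain L s0 where "L \<in> K" "strict_mono s0" "((\<lambda>j. \<theta> (j + m)) \<circ> s0) \<longlonglongrightarrow> L"
    by (rule seq_compactE[OF compact_imp_seq_compact[OF assms(1)]])
  have "strict_mono (\<lambda>j. s0 j + m)"
    using \<open>strict_mono s0\<close> by (simp add: strict_mono_def)
  moreover have "(\<theta> \<circ> (\<lambda>j. s0 j + m)) \<longlonglongrightarrow> L"
    using \<open>((\<lambda>j. \<theta> (j + m)) \<circ> s0) \<longlonglongrightarrow> L\<close> by (simp add: o_def)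
  ultimately show ?thesis
    using \<open>L \<in> K\<close> by auto
qed

lemma argmin_on_limit:
  fixes F :: "nat \<Rightarrow> 'a::topological_space \<Rightarrow> real" and f p :: "'a \<Rightarrow> real" and C :: "'a set"
  defines "pen x \<equiv> if x \<in> C then ereal (p x) else \<infinity>"
  assumes min: "\<forall>j. \<theta> j \<in> argmin_on \<Theta> (\<lambda>x. ereal (F j x) + pen x)"
    and "\<theta> \<longlonglongrightarrow> L" "L \<in> \<Theta>" "closed C" "continuous_on UNIV p"
    and lim_diag: "(\<lambda>j. F j (\<theta> j)) \<longlonglongrightarrow> f L"
    and lim_pointwise: "\<forall>x\<in>\<Theta>. (\<lambda>j. F j x) \<longlonglongrightarrow> f x"
  shows "L \<in> argmin_on \<Theta> (\<lambda>x. ereal (f x) + pen x)"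
proof -
  have "ereal (f L) + pen L \<le> ereal (f x) + pen x" if "x \<in> \<Theta>" for x
  proof (cases "x \<in> C")
    case False
    then show ?thesis unfolding pen_def by simp
  next
    case True
    have minj: "ereal (F j (\<theta> j)) + pen (\<theta> j) \<le> ereal (F j x) + pen x" for j
      using min \<open>x \<in> \<Theta>\<close> unfolding argmin_on_def by blast
    have "\<theta> j \<in> C \<and> F j (\<theta> j) + p (\<theta> j) \<le> F j x + p x" for j
      using minj[of j] True unfolding pen_def by (cases "\<theta> j \<in> C") auto
    then have "\<theta> j \<in> C" and ineq: "F j (\<theta> j) + p (\<theta> j) \<le> F j x + p x" for j
      by auto
    then have "L \<in> C"
      using \<open>closed C\<close> \<open>\<theta> \<longlonglongrightarrow> L\<close> closed_sequentially by blast
    have "(\<lambda>j. p (\<theta> j)) \<longlonglongrightarrow> p L"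
      using \<open>continuous_on UNIV p\<close> \<open>\<theta> \<longlonglongrightarrow> L\<close> by (simp add: continuous_on_tendsto_compose)
    with lim_diag have "(\<lambda>j. F j (\<theta> j) + p (\<theta> j)) \<longlonglongrightarrow> f L + p L"
      by (rule tendsto_add)
    moreover have "(\<lambda>j. F j x + p x) \<longlonglongrightarrow> f x + p x"
      using lim_pointwise \<open>x \<in> \<Theta>\<close> by (intro tendsto_add tendsto_const) auto
    ultimately have "f L + p L \<le> f x + p x"
      using ineq by (intro tendsto_le[of sequentially]) auto
    with True \<open>L \<in> C\<close> show ?thesis unfolding pen_def by simp
  qed
  with \<open>L \<in> \<Theta>\<close> show ?thesis unfolding argmin_on_def by blast
qed

theorem proposition1:
  fixes T :: nat and n :: "nat \<Rightarrow> nat"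
    and X :: "nat \<Rightarrow> real^'p::finite"
    and y :: "nat \<Rightarrow> nat \<Rightarrow> real^'d::finite"
    and la lb r c R :: real
    and \<Theta> :: "('k::finite,'p,'d) param set"
    and Y :: "(real^'d) set"
    and a :: "real^'d"
    and \<theta>t :: "nat \<Rightarrow> ('k,'p,'d) param"
  assumes "T \<ge> 1" and "\<forall>t<T. n t \<ge> 1"
    and "la \<ge> 0" and "lb \<ge> 0" and "r > 0"
    and "compact \<Theta>" and "c > 0"
    and "\<forall>\<theta>\<in>\<Theta>. \<forall>k. pos_def_matrix (Sig \<theta> $ k) \<and> lambda_min (Sig \<theta> $ k) \<ge> c"
    and "compact Y" and "0 < R"
    and "\<forall>t<T. \<forall>i<n t. y t i \<in> Y"
    and "\<forall>u\<in>Y. \<forall>v\<in>Y. linf_norm (u - v) \<le> R"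
    and "Y \<subseteq> {x. \<forall>i. a $ i \<le> x $ i \<and> x $ i \<le> a $ i + R}"
    and "\<forall>D\<ge>1. \<theta>t D \<in> argmin_on \<Theta>
           (\<lambda>\<theta>. ereal (- binned_log_lik a R D T n X y \<theta> / real (\<Sum>t<T. n t))
                 + penalty la lb r T X \<theta>)"
  shows "\<exists>s L. strict_mono s \<and> (\<theta>t \<circ> s) \<longlonglongrightarrow> L \<and>
           L \<in> argmin_on \<Theta>
             (\<lambda>\<theta>. ereal (- log_lik T n X y \<theta> / real (\<Sum>t<T. n t)) + penalty la lb r T X \<theta>)"
proof -
  define N where "N = real (\<Sum>t<T. n t)"
  let ?pen = "\<lambda>\<theta>. if \<theta> \<in> feasible_params r T X then ereal (l1_penalty la lb \<theta>) else \<infinity>"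
  have "0 < n 0" "n 0 \<le> (\<Sum>t<T. n t)"
    using assms(1,2) by (auto intro!: member_le_sum)
  then have "N \<noteq> 0" unfolding N_def by linarith
  have invertible: "\<forall>k. det (Sig \<theta> $ k) \<noteq> 0" if "\<theta> \<in> \<Theta>" for \<theta>
    using assms(8) that pos_def_matrix_det_nonzero by blast
  have min: "\<theta>t D \<in> argmin_on \<Theta> (\<lambda>\<theta>. ereal (- binned_log_lik a R D T n X y \<theta> / N) + ?pen \<theta>)"
    if "D \<ge> 1" for D
    using assms(14) that unfolding penalty_eq_if N_def by blast
  then have "\<forall>D\<ge>1. \<theta>t D \<in> \<Theta>" unfolding argmin_on_def by blast
  then obtain s L where "strict_mono s" "\<forall>j. s j \<ge> 1" "L \<in> \<Theta>" "(\<theta>t \<circ> s) \<longlonglongrightarrow> L"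
    using compact_subseq_tendsto_from[OF assms(6)] by blast
  have data_in_cube: "\<forall>t<T. \<forall>i<n t. \<forall>j. a $ j \<le> y t i $ j \<and> y t i $ j \<le> a $ j + R"
    using assms(11,13) by blast
  have "L \<in> argmin_on \<Theta> (\<lambda>\<theta>. ereal (- log_lik T n X y \<theta> / N) + ?pen \<theta>)"
  proof (rule argmin_on_limit[where F = "\<lambda>j \<theta>. - binned_log_lik a R (s j) T n X y \<theta> / N"])
    show "\<forall>j. (\<theta>t \<circ> s) j \<in> argmin_on \<Theta> (\<lambda>\<theta>. ereal (- binned_log_lik a R (s j) T n X y \<theta> / N) + ?pen \<theta>)"
      using min \<open>\<forall>j. s j \<ge> 1\<close> by simp
    show "(\<lambda>j. - binned_log_lik a R (s j) T n X y ((\<theta>t \<circ> s) j) / N) \<longlonglongrightarrow> - log_lik T n X y L / N"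
      using \<open>strict_mono s\<close> \<open>(\<theta>t \<circ> s) \<longlonglongrightarrow> L\<close> invertible[OF \<open>L \<in> \<Theta>\<close>] assms(10) data_in_cube
      by (intro tendsto_intros tendsto_binned_log_lik filterlim_subseq) (auto simp: o_def \<open>N \<noteq> 0\<close>)
    show "\<forall>\<theta>\<in>\<Theta>. (\<lambda>j. - binned_log_lik a R (s j) T n X y \<theta> / N) \<longlonglongrightarrow> - log_lik T n X y \<theta> / N"
      using \<open>strict_mono s\<close> invertible assms(10) data_in_cube
      by (intro ballI tendsto_intros tendsto_binned_log_lik filterlim_subseq) (auto simp: \<open>N \<noteq> 0\<close>)
  qed (use \<open>L \<in> \<Theta>\<close> \<open>(\<theta>t \<circ> s) \<longlonglongrightarrow> L\<close> closed_feasible_params continuous_l1_penalty in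
      \<open>simp_all add: o_def\<close>)
  with \<open>strict_mono s\<close> \<open>(\<theta>t \<circ> s) \<longlonglongrightarrow> L\<close> show ?thesis
    unfolding penalty_eq_if N_def by blast
qed

end
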